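(* Let $\mu$ be a partition of $k$. Then, as functions on Young diagrams, $\mathrm{Ko}_\mu=\sum_{\nu\vdash k}K^\nu_\mu\,S^\star_\nu$.
   Context: $K^\lambda_\tau$ is the Kostka number: the number of semi-standard Young tableaux of shape $\lambda$ and type $\tau$ (exactly $\tau_i$ entries equal to $i$). $(x)_a=x(x-1)\cdots(x-a+1)$. For $\mu\vdash k$ and $|\lambda|=n$, $\mathrm{Ko}_\mu(\lambda)=(n)_k\,K^\lambda_{\mu1^{n-k}}/K^\lambda_{1^n}$ if $n\ge k$ (where $\mu1^{n-k}$ is $\mu$ with $n-k$ parts $1$ appended) and $0$ otherwise. The shifted Schur function $S^\star_\nu$ is given for $n\ge\ell(\nu)$ by $S^\star_\nu(x_1,\dots,x_n)=\det\big((x_i+n-i)_{\nu_j+n-j}\big)/\det\big((x_i+n-i)_{n-j}\big)$, and evaluated at a Young diagram $\lambda$ with $\ell$ rows as $S^\star_\nu(\lambda_1,\dots,\lambda_\ell,0,\dots,0)$ (the value does not depend on the number of added zeros). *)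

theory Defs
  imports Complex_Main "Jordan_Normal_Form.Determinant"
begin

definition is_partition :: "nat list \<Rightarrow> bool" where
  "is_partition lam \<longleftrightarrow> sorted_wrt (\<ge>) lam \<and> 0 \<notin> set lam"

definition partitions_of :: "nat \<Rightarrow> nat list set" where
  "partitions_of k = {nu. is_partition nu \<and> sum_list nu = k}"

text \<open>Cells of a Young diagram (0-based row i, column j).\<close>
definition cells :: "nat list \<Rightarrow> (nat \<times> nat) set" where
  "cells lam = {(i, j). i < length lam \<and> j < lam ! i}"

text \<open>Semi-standard Young tableau of shape lam and type tau (entries 1..length tau,
  exactly tau!(c-1) entries equal to c); the function is 0 outside the diagram.\<close>
definition is_ssyt :: "nat list \<Rightarrow> nat list \<Rightarrow> (nat \<Rightarrow> nat \<Rightarrow> nat) \<Rightarrow> bool" where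
  "is_ssyt lam tau T \<longleftrightarrow>
     (\<forall>i j. (i, j) \<notin> cells lam \<longrightarrow> T i j = 0) \<and>
     (\<forall>(i, j) \<in> cells lam. 1 \<le> T i j \<and> T i j \<le> length tau) \<and>
     (\<forall>i j. (i, Suc j) \<in> cells lam \<longrightarrow> T i j \<le> T i (Suc j)) \<and>
     (\<forall>i j. (Suc i, j) \<in> cells lam \<longrightarrow> T i j < T (Suc i) j) \<and>
     (\<forall>c \<in> {1..length tau}. card {(i, j) \<in> cells lam. T i j = c} = tau ! (c - 1))"

definition kostka :: "nat list \<Rightarrow> nat list \<Rightarrow> nat" where
  "kostka lam tau = card {T. is_ssyt lam tau T}"

definition ffact_r :: "real \<Rightarrow> nat \<Rightarrow> real" where
  "ffact_r x a = (\<Prod>i<a. (x - of_nat i))"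

definition Ko :: "nat list \<Rightarrow> nat list \<Rightarrow> real" where
  "Ko mu lam = (let n = sum_list lam; k = sum_list mu in
     if n \<ge> k then ffact_r (real n) k * real (kostka lam (mu @ replicate (n - k) 1))
                   / real (kostka lam (replicate n 1))
     else 0)"

text \<open>Shifted Schur function in n variables x_1..x_n (x given as a function on 0-based
  indices, x i = x_(i+1)), and nu_j = 0 for j > length nu.\<close>
definition shifted_schur :: "nat list \<Rightarrow> nat \<Rightarrow> (nat \<Rightarrow> real) \<Rightarrow> real" where
  "shifted_schur nu n x =
     det (mat n n (\<lambda>(i, j). ffact_r (x i + real n - real (Suc i))
                                 ((if j < length nu then nu ! j else 0) + n - Suc j)))
     / det (mat n n (\<lambda>(i, j). ffact_r (x i + real n - real (Suc i)) (n - Suc j)))"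

definition shifted_schur_at :: "nat list \<Rightarrow> nat list \<Rightarrow> real" where
  "shifted_schur_at nu lam =
     shifted_schur nu (max (length lam) (length nu))
       (\<lambda>i. if i < length lam then real (lam ! i) else 0)"

end

theory Submission
  imports Defs "HOL-Library.More_List"
begin

text \<open>
  Let A(x, \<nu>) = det (1 / (x_i - \<nu>_j - i + j)!) be Aitken's determinant, with 1/m! = 0 for
  m < 0. At a diagram x = \<lambda> it is 1 for \<nu> = \<lambda> and vanishes unless \<nu> \<subseteq> \<lambda>, and expanding over
  permutations gives \<Sum>_i A(\<lambda> - e_i, \<nu>) = (|\<lambda>| - |\<nu>|) A(\<lambda>, \<nu>), where only rows ending in a
  removable corner contribute. Deleting the largest entry of a tableau of type \<tau>1 gives the
  same recursion K^\<lambda>_(\<tau>1) = \<Sum> K^(\<lambda> - corner)_\<tau> over removable corners, so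
  K^\<lambda>_(\<mu>1^r) = r! \<Sum>_\<nu> K^\<nu>_\<mu> A(\<lambda>, \<nu>) by induction on r; for \<mu> = \<emptyset> this is
  K^\<lambda>_(1^n) = n! A(\<lambda>, \<emptyset>). Pulling (\<lambda>_i + n - i)! out of row i of both determinants
  defining S*_\<nu>(\<lambda>) gives S*_\<nu>(\<lambda>) = A(\<lambda>, \<nu>) / A(\<lambda>, \<emptyset>), and the theorem follows from
  (n)_k (n - k)! = n!.
\<close>

lemma det_mat_permutes_sum:
  "det (mat n n f) = (\<Sum>p | p permutes {0..<n}. signof p * (\<Prod>i=0..<n. f (i, p i)))"
proof -
  have "(\<Prod>i=0..<n. mat n n f $$ (i, p i)) = (\<Prod>i=0..<n. f (i, p i))" if "p permutes {0..<n}" for p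
    using permutes_in_image[OF that] by (intro prod.cong) auto
  then show ?thesis
    unfolding det_def'[of "mat n n f" n, OF mat_carrier] by (intro sum.cong) auto
qed

lemma det_mat_cong:
  assumes "\<And>i j. i < n \<Longrightarrow> j < n \<Longrightarrow> f (i, j) = g (i, j)"
  shows "det (mat n n f) = det (mat n n g)"
  using assms by (intro arg_cong[where f = det] eq_matI) auto

lemma det_mat_scale_rows:
  "det (mat n n (\<lambda>(i, j). c i * f i j)) = (\<Prod>i<n. c i) * det (mat n n (\<lambda>(i, j). f i j))"
  by (simp add: det_mat_permutes_sum prod.distrib atLeast0LessThan sum_distrib_left mult_ac)

text \<open>For each permutation p the scalars taken from the rows add up to
  \<Sum>_i (a i - b (p i)) = \<Sum> a - \<Sum> b.\<close>
lemma sum_det_mat_scale_row: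
  fixes f :: "nat \<Rightarrow> nat \<Rightarrow> 'a :: comm_ring_1"
  shows "(\<Sum>i<n. det (mat n n (\<lambda>(i', j). if i' = i then (a i - b j) * f i' j else f i' j)))
       = ((\<Sum>i<n. a i) - (\<Sum>j<n. b j)) * det (mat n n (\<lambda>(i, j). f i j))"
proof -
  let ?P = "{p. p permutes {0..<n}}"
  let ?t = "\<lambda>p. signof p * (\<Prod>i=0..<n. f i (p i))"
  have row: "det (mat n n (\<lambda>(i', j). if i' = i then (a i - b j) * f i' j else f i' j))
      = (\<Sum>p\<in>?P. (a i - b (p i)) * ?t p)" if "i < n" for i
  proof -
    have "(\<Prod>i'=0..<n. if i' = i then (a i - b (p i')) * f i' (p i') else f i' (p i'))
        = (a i - b (p i)) * (\<Prod>i'=0..<n. f i' (p i'))" for p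
      using that by (simp add: prod.delta_remove prod.remove[of "{0..<n}" i])
    then show ?thesis
      by (simp add: det_mat_permutes_sum mult_ac)
  qed
  have perm: "(\<Sum>i<n. a i - b (p i)) = (\<Sum>i<n. a i) - (\<Sum>j<n. b j)" if "p \<in> ?P" for p
  proof -
    have "bij_betw p {..<n} {..<n}"
      using that by (auto intro: permutes_imp_bij simp: atLeast0LessThan)
    then show ?thesis
      by (simp add: sum_subtractf sum.reindex_bij_betw)
  qed
  have "(\<Sum>i<n. det (mat n n (\<lambda>(i', j). if i' = i then (a i - b j) * f i' j else f i' j)))
      = (\<Sum>i<n. \<Sum>p\<in>?P. (a i - b (p i)) * ?t p)"
    by (intro sum.cong) (simp_all add: row)
  also have "\<dots> = (\<Sum>p\<in>?P. (\<Sum>i<n. a i - b (p i)) * ?t p)"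
    by (subst sum.swap) (simp add: sum_distrib_right)
  also have "\<dots> = ((\<Sum>i<n. a i) - (\<Sum>j<n. b j)) * det (mat n n (\<lambda>(i, j). f i j))"
    by (simp add: perm det_mat_permutes_sum sum_distrib_left)
  finally show ?thesis .
qed

text \<open>A permutation missing the zero block would map the i0 rows above it onto the i0 + 1
  columns \<le> i0.\<close>
lemma det_mat_eq_0_of_zero_block:
  assumes i0: "i0 < n" and zero: "\<And>i j. i0 \<le> i \<Longrightarrow> i < n \<Longrightarrow> j \<le> i0 \<Longrightarrow> f (i, j) = 0"
  shows "det (mat n n f) = 0"
  unfolding det_mat_permutes_sum
proof (intro sum.neutral ballI)
  fix p assume "p \<in> {p. p permutes {0..<n}}"
  then have p: "p permutes {0..<n}" by simp
  have "\<exists>i\<in>{0..<n}. f (i, p i) = 0"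
  proof (rule ccontr)
    assume "\<not> ?thesis"
    then have nonzero: "\<And>i. i < n \<Longrightarrow> f (i, p i) \<noteq> 0" by auto
    have "{0..i0} \<subseteq> p ` {0..<i0}"
    proof
      fix j assume j: "j \<in> {0..i0}"
      then obtain i where i: "i < n" "p i = j"
        using permutes_image[OF p] i0 by (metis atLeastAtMost_iff atLeastLessThan_iff imageE
            le_less_trans)
      have "i < i0"
        using zero[of i j] nonzero[of i] i j by (metis atLeastAtMost_iff not_less)
      then show "j \<in> p ` {0..<i0}" using i by auto
    qed
    then have "card {0..i0} \<le> card (p ` {0..<i0})" by (intro card_mono) auto
    also have "\<dots> \<le> card {0..<i0}" by (rule card_image_le) auto
    finally show False by simp
  qed
  then show "signof p * (\<Prod>i=0..<n. f (i, p i)) = 0"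
    by (simp add: prod_zero)
qed

lemma nth_default_antimono:
  assumes "sorted_wrt (\<ge>) l" "i \<le> i'"
  shows "nth_default 0 l i' \<le> nth_default (0 :: nat) l i"
  using assms by (cases "i = i'") (auto simp: nth_default_def sorted_wrt_iff_nth_less)

lemma sum_nth_default:
  assumes "length l \<le> n"
  shows "(\<Sum>i<n. nth_default 0 l i) = sum_list l"
proof -
  have "(\<Sum>i<n. nth_default 0 l i) = (\<Sum>i<length l. nth_default 0 l i)"
    using assms by (intro sum.mono_neutral_right) (auto simp: nth_default_beyond)
  then show ?thesis
    by (simp add: sum_list_sum_nth atLeast0LessThan nth_default_nth)
qed

definition corner_row :: "nat list \<Rightarrow> nat \<Rightarrow> bool" where
  "corner_row l i \<longleftrightarrow> i < length l \<and> 0 < l ! i \<and> nth_default 0 l (Suc i) < l ! i"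

definition remove_corner :: "nat list \<Rightarrow> nat \<Rightarrow> nat list" where
  "remove_corner l i = l[i := l ! i - 1]"

lemma length_remove_corner [simp]: "length (remove_corner l i) = length l"
  by (simp add: remove_corner_def)

lemma nth_default_remove_corner:
  "i < length l \<Longrightarrow> nth_default 0 (remove_corner l i) = (nth_default 0 l)(i := nth_default 0 l i - 1)"
  by (auto simp: remove_corner_def nth_default_def fun_eq_iff)

lemma sum_list_remove_corner: "corner_row l i \<Longrightarrow> sum_list (remove_corner l i) = sum_list l - 1"
  by (simp add: corner_row_def remove_corner_def sum_list_update)

lemma sorted_remove_corner:
  assumes l: "sorted_wrt (\<ge>) l" and i: "corner_row l i"
  shows "sorted_wrt (\<ge>) (remove_corner l i)"
  unfolding sorted_wrt_iff_nth_less
proof (intro allI impI)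
  fix a b assume ab: "a < b" "b < length (remove_corner l i)"
  have "l ! b \<le> l ! a" using l ab by (simp add: sorted_wrt_iff_nth_less)
  moreover have "l ! b < l ! i" if "i < b"
    using nth_default_antimono[OF l, of "Suc i" b] i that ab by (simp add: corner_row_def nth_default_nth)
  ultimately show "remove_corner l i ! b \<le> remove_corner l i ! a"
    using ab i by (auto simp: remove_corner_def corner_row_def nth_list_update)
qed

definition inv_fact :: "int \<Rightarrow> real" where
  "inv_fact z = (if z < 0 then 0 else 1 / fact (nat z))"

lemma inv_fact_diff_1: "inv_fact (z - 1) = of_int z * inv_fact z"
proof (cases "z \<le> 0")
  case True
  then show ?thesis by (cases "z = 0") (auto simp: inv_fact_def)
next
  case False
  then have "nat z = Suc (nat (z - 1))" by simp
  then show ?thesis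
    using False by (simp add: inv_fact_def)
qed

definition aitken_det :: "nat \<Rightarrow> (nat \<Rightarrow> int) \<Rightarrow> nat list \<Rightarrow> real" where
  "aitken_det n x nu =
     det (mat n n (\<lambda>(i, j). inv_fact (x i - int (nth_default 0 nu j) - int i + int j)))"

lemma sum_aitken_det_lower:
  "(\<Sum>i<n. aitken_det n (x(i := x i - 1)) nu)
     = (of_int (\<Sum>i<n. x i) - real (\<Sum>j<n. nth_default 0 nu j)) * aitken_det n x nu"
proof -
  let ?g = "\<lambda>i j. inv_fact (x i - int (nth_default 0 nu j) - int i + int j)"
  let ?a = "\<lambda>i. of_int (x i) - real i" and ?b = "\<lambda>j. real (nth_default 0 nu j) - real j"
  have "inv_fact (x i - 1 - int v - int i + int j)
      = (?a i - (real v - real j)) * inv_fact (x i - int v - int i + int j)" for i j v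
    using inv_fact_diff_1[of "x i - int v - int i + int j"] by (simp add: algebra_simps)
  then have "aitken_det n (x(i := x i - 1)) nu
      = det (mat n n (\<lambda>(i', j). if i' = i then (?a i - ?b j) * ?g i' j else ?g i' j))" for i
    unfolding aitken_det_def by (intro det_mat_cong) auto
  then have "(\<Sum>i<n. aitken_det n (x(i := x i - 1)) nu)
      = ((\<Sum>i<n. ?a i) - (\<Sum>j<n. ?b j)) * aitken_det n x nu"
    by (simp add: sum_det_mat_scale_row aitken_det_def)
  then show ?thesis
    by (simp add: sum_subtractf)
qed

lemma aitken_det_diagonal:
  assumes "sorted_wrt (\<ge>) l"
  shows "aitken_det n (int \<circ> nth_default 0 l) l = 1"
proof -
  let ?A = "mat n n (\<lambda>(i, j). inv_fact (int (nth_default 0 l i) - int (nth_default 0 l j) - int i + int j))"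
  have "?A $$ (i, j) = 0" if "i < n" "j < i" for i j
    using nth_default_antimono[OF assms, of j i] that by (simp add: inv_fact_def)
  then have "upper_triangular ?A"
    by (simp add: upper_triangular_def)
  then have "det ?A = prod_list (diag_mat ?A)"
    by (intro det_upper_triangular) auto
  also have "diag_mat ?A = map (\<lambda>_. 1) [0..<n]"
    by (auto simp: diag_mat_def inv_fact_def intro: map_cong)
  finally show ?thesis
    by (simp add: aitken_det_def map_replicate_const)
qed

lemma aitken_det_eq_0_if_not_subdiagram:
  assumes "sorted_wrt (\<ge>) l" "sorted_wrt (\<ge>) nu" "i0 < n"
    and "nth_default 0 l i0 < nth_default 0 nu i0"
  shows "aitken_det n (int \<circ> nth_default 0 l) nu = 0"
  unfolding aitken_det_def
proof (intro det_mat_eq_0_of_zero_block[OF \<open>i0 < n\<close>])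
  fix i j assume "i0 \<le> i" "j \<le> i0"
  then have "nth_default 0 l i \<le> nth_default 0 l i0" "nth_default 0 nu i0 \<le> nth_default 0 nu j"
    using nth_default_antimono assms(1,2) by blast+
  with assms(4) \<open>i0 \<le> i\<close> \<open>j \<le> i0\<close>
  show "(\<lambda>(i, j). inv_fact ((int \<circ> nth_default 0 l) i - int (nth_default 0 nu j) - int i + int j))
          (i, j) = 0"
    by (simp add: inv_fact_def)
qed

text \<open>Lowering an empty row creates a zero block below it; lowering a row as long as the next one
  makes the two rows equal.\<close>
lemma aitken_det_lower_non_corner:
  assumes l: "sorted_wrt (\<ge>) l" "length l \<le> n" and i: "i < n" "\<not> corner_row l i"
  shows "aitken_det n ((int \<circ> nth_default 0 l)(i := int (nth_default 0 l i) - 1)) nu = 0"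
proof (cases "nth_default 0 l i = 0")
  case True
  then have "nth_default 0 l i' = 0" if "i \<le> i'" for i'
    using nth_default_antimono[OF l(1) that] by simp
  then show ?thesis
    unfolding aitken_det_def by (intro det_mat_eq_0_of_zero_block[OF i(1)]) (auto simp: inv_fact_def)
next
  case False
  then have "i < length l"
    by (auto simp: nth_default_def split: if_splits)
  moreover have "nth_default 0 l (Suc i) \<le> nth_default 0 l i"
    using nth_default_antimono[OF l(1)] by simp
  ultimately have same: "nth_default 0 l (Suc i) = nth_default 0 l i"
    using i False by (auto simp: corner_row_def nth_default_nth)
  with False have "Suc i < length l"
    by (metis nth_default_beyond not_less)
  with l(2) have "Suc i < n" by simp
  with same show ?thesis
    unfolding aitken_det_def by (intro det_identical_rows[of _ n i "Suc i"] eq_vecI) (auto simp: algebra_simps)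
qed

lemma sum_corner_rows_aitken_det:
  assumes l: "sorted_wrt (\<ge>) l" "length l \<le> n" and nu: "length nu \<le> n"
  shows "(\<Sum>i | corner_row l i. aitken_det n ((int \<circ> nth_default 0 l)(i := int (nth_default 0 l i) - 1)) nu)
       = (real (sum_list l) - real (sum_list nu)) * aitken_det n (int \<circ> nth_default 0 l) nu"
proof -
  have "(\<Sum>i | corner_row l i. aitken_det n ((int \<circ> nth_default 0 l)(i := int (nth_default 0 l i) - 1)) nu)
      = (\<Sum>i<n. aitken_det n ((int \<circ> nth_default 0 l)(i := int (nth_default 0 l i) - 1)) nu)"
    using aitken_det_lower_non_corner[OF l] l(2)
    by (intro sum.mono_neutral_left) (auto simp: corner_row_def)
  also have "\<dots> = (real (sum_list l) - real (sum_list nu)) * aitken_det n (int \<circ> nth_default 0 l) nu"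
    using sum_aitken_det_lower[of n "int \<circ> nth_default 0 l" nu]
    by (simp add: sum_nth_default l nu flip: of_nat_sum)
  finally show ?thesis .
qed

lemma cells_eq_nth_default: "cells l = {(i, j). j < nth_default 0 l i}"
  by (auto simp: cells_def nth_default_def split: if_splits)

lemma finite_cells: "finite (cells l)"
proof -
  have "cells l = (SIGMA i:{..<length l}. {..<l ! i})"
    by (auto simp: cells_def)
  then show ?thesis by simp
qed

lemma cells_left: "(a, Suc b) \<in> cells l \<Longrightarrow> (a, b) \<in> cells l"
  by (auto simp: cells_def)

lemma cells_up: "sorted_wrt (\<ge>) l \<Longrightarrow> (Suc a, b) \<in> cells l \<Longrightarrow> (a, b) \<in> cells l"
  using nth_default_antimono[of l a "Suc a"] by (auto simp: cells_eq_nth_default)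

lemma cells_remove_corner:
  "corner_row l i \<Longrightarrow> cells (remove_corner l i) = cells l - {(i, l ! i - 1)}"
  by (auto simp: cells_eq_nth_default nth_default_remove_corner corner_row_def nth_default_nth
      split: if_splits)

lemma kostka_cong_cells: "cells l = cells l' \<Longrightarrow> kostka l t = kostka l' t"
  by (simp add: kostka_def is_ssyt_def)

lemma finite_ssyt: "finite {T. is_ssyt l t T}"
proof -
  let ?restrict = "\<lambda>T. restrict (case_prod T) (cells l)"
  have "inj_on ?restrict {T. is_ssyt l t T}"
    by (rule inj_onI) (auto simp: is_ssyt_def fun_eq_iff restrict_def split: if_splits; metis)
  moreover have "?restrict ` {T. is_ssyt l t T} \<subseteq> PiE (cells l) (\<lambda>_. {0..length t})"
    by (auto simp: is_ssyt_def)
  then have "finite (?restrict ` {T. is_ssyt l t T})"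
    by (rule finite_subset) (simp add: finite_PiE finite_cells)
  ultimately show ?thesis
    by simp
qed

lemma ssyt_entry_bounds: "is_ssyt l t T \<Longrightarrow> (a, b) \<in> cells l \<Longrightarrow> 1 \<le> T a b \<and> T a b \<le> length t"
  unfolding is_ssyt_def by fast

lemma ssyt_outside: "is_ssyt l t T \<Longrightarrow> (a, b) \<notin> cells l \<Longrightarrow> T a b = 0"
  unfolding is_ssyt_def by fast

lemma ssyt_row_mono: "is_ssyt l t T \<Longrightarrow> (a, Suc b) \<in> cells l \<Longrightarrow> T a b \<le> T a (Suc b)"
  unfolding is_ssyt_def by fast

lemma ssyt_col_strict: "is_ssyt l t T \<Longrightarrow> (Suc a, b) \<in> cells l \<Longrightarrow> T a b < T (Suc a) b"
  unfolding is_ssyt_def by fast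

lemma ssyt_card_entries:
  "is_ssyt l t T \<Longrightarrow> c \<in> {1..length t} \<Longrightarrow> card {(a, b) \<in> cells l. T a b = c} = t ! (c - 1)"
  unfolding is_ssyt_def by fast

lemma card_ssyt_largest_entry:
  assumes "is_ssyt l (t @ [1]) T"
  shows "card {(a, b) \<in> cells l. T a b = Suc (length t)} = 1"
  using ssyt_card_entries[OF assms, of "Suc (length t)"] by (simp add: nth_append)

lemma ssyt_largest_entry_unique:
  assumes T: "is_ssyt l (t @ [1]) T"
    and "(a, b) \<in> cells l" "T a b = Suc (length t)" "(a', b') \<in> cells l" "T a' b' = Suc (length t)"
  shows "(a, b) = (a', b')"
proof -
  obtain x where "{(a, b) \<in> cells l. T a b = Suc (length t)} = {x}"
    using card_ssyt_largest_entry[OF T] by (rule card_1_singletonE)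
  moreover have "(a, b) \<in> {(a, b) \<in> cells l. T a b = Suc (length t)}"
    and "(a', b') \<in> {(a, b) \<in> cells l. T a b = Suc (length t)}"
    using assms by auto
  ultimately show ?thesis
    by (metis singletonD)
qed

lemma ssyt_largest_entry_at_corner:
  assumes T: "is_ssyt l (t @ [1]) T"
    and ij: "(i, j) \<in> cells l" "T i j = Suc (length t)"
  shows "corner_row l i \<and> j = l ! i - 1"
proof -
  have "(i, Suc j) \<notin> cells l"
  proof
    assume right: "(i, Suc j) \<in> cells l"
    then have "T i (Suc j) = Suc (length t)"
      using ssyt_row_mono[OF T right] ssyt_entry_bounds[OF T right] ij by simp
    with ssyt_largest_entry_unique[OF T ij right] show False by simp
  qed
  moreover have "(Suc i, j) \<notin> cells l"
    using ssyt_col_strict[OF T] ssyt_entry_bounds[OF T] ij by fastforce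
  ultimately show ?thesis
    using ij(1) by (auto simp: corner_row_def cells_def nth_default_def)
qed

lemma ssyt_remove_largest:
  assumes l: "sorted_wrt (\<ge>) l" and i: "corner_row l i"
    and T: "is_ssyt l (t @ [1]) T" and Tc: "T i (l ! i - 1) = Suc (length t)"
  shows "is_ssyt (remove_corner l i) t (T(i := (T i)(l ! i - 1 := 0)))"
proof -
  define p where "p = l ! i - 1"
  let ?T = "T(i := (T i)(p := 0))"
  have cells': "cells (remove_corner l i) = cells l - {(i, p)}"
    using cells_remove_corner[OF i] by (simp add: p_def)
  have "(i, p) \<in> cells l"
    using i by (auto simp: corner_row_def cells_def p_def)
  then have "T a b \<noteq> Suc (length t)" if "(a, b) \<in> cells l - {(i, p)}" for a b
    using that ssyt_largest_entry_unique[OF T, of a b i p] Tc p_def by blast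
  then have bounds: "1 \<le> T a b \<and> T a b \<le> length t" if "(a, b) \<in> cells l - {(i, p)}" for a b
    using that ssyt_entry_bounds[OF T, of a b] by fastforce
  show ?thesis
    unfolding is_ssyt_def cells' p_def[symmetric]
  proof (intro conjI allI impI ballI)
    fix a b assume "(a, b) \<notin> cells l - {(i, p)}"
    then show "?T a b = 0"
      using ssyt_outside[OF T] by auto
  next
    fix x assume "x \<in> cells l - {(i, p)}"
    then show "case x of (a, b) \<Rightarrow> 1 \<le> ?T a b \<and> ?T a b \<le> length t"
      using bounds by (cases x) (auto split: if_splits)
  next
    fix a b assume ab: "(a, Suc b) \<in> cells l - {(i, p)}"
    moreover have "(a, b) \<in> cells l - {(i, p)}"
      using ab cells_left[of a b "remove_corner l i"] by (simp add: cells')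
    ultimately show "?T a b \<le> ?T a (Suc b)"
      using ssyt_row_mono[OF T, of a b] by auto
  next
    fix a b assume ab: "(Suc a, b) \<in> cells l - {(i, p)}"
    moreover have "(a, b) \<in> cells l - {(i, p)}"
      using ab cells_up[OF sorted_remove_corner[OF l i], of a b] by (simp add: cells')
    ultimately show "?T a b < ?T (Suc a) b"
      using ssyt_col_strict[OF T, of a b] by auto
  next
    fix c assume c: "c \<in> {1..length t}"
    have "{(a, b) \<in> cells l - {(i, p)}. ?T a b = c} = {(a, b) \<in> cells l. T a b = c}"
      using Tc c p_def by auto
    then show "card {(a, b) \<in> cells l - {(i, p)}. ?T a b = c} = t ! (c - 1)"
      using ssyt_card_entries[OF T, of c] c by (auto simp: nth_append)
  qed
qed

lemma ssyt_add_largest: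
  assumes l: "sorted_wrt (\<ge>) l" and i: "corner_row l i" and T: "is_ssyt (remove_corner l i) t T"
  shows "is_ssyt l (t @ [1]) (T(i := (T i)(l ! i - 1 := Suc (length t))))"
proof -
  define p where "p = l ! i - 1"
  let ?T = "T(i := (T i)(p := Suc (length t)))"
  have cells': "cells (remove_corner l i) = cells l - {(i, p)}"
    using cells_remove_corner[OF i] by (simp add: p_def)
  have ip: "(i, p) \<in> cells l" and right: "(i, Suc p) \<notin> cells l" and below: "(Suc i, p) \<notin> cells l"
    using i by (auto simp: corner_row_def cells_def nth_default_def p_def)
  have bounds: "1 \<le> T a b \<and> T a b \<le> length t" if "(a, b) \<in> cells l - {(i, p)}" for a b
    using ssyt_entry_bounds[OF T] that by (simp add: cells')
  show ?thesis
    unfolding is_ssyt_def p_def[symmetric]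
  proof (intro conjI allI impI ballI)
    fix a b assume "(a, b) \<notin> cells l"
    then show "?T a b = 0"
      using ssyt_outside[OF T, of a b] ip by (auto simp: cells')
  next
    fix x assume "x \<in> cells l"
    then show "case x of (a, b) \<Rightarrow> 1 \<le> ?T a b \<and> ?T a b \<le> length (t @ [1])"
      using bounds by fastforce
  next
    fix a b assume ab: "(a, Suc b) \<in> cells l"
    then have ab': "(a, b) \<in> cells l - {(i, p)}"
      using cells_left[OF ab] right by auto
    then show "?T a b \<le> ?T a (Suc b)"
      using ssyt_row_mono[OF T, of a b] ab bounds[OF ab'] by (auto simp: cells')
  next
    fix a b assume ab: "(Suc a, b) \<in> cells l"
    then have ab': "(a, b) \<in> cells l - {(i, p)}"
      using cells_up[OF l ab] below by auto
    then show "?T a b < ?T (Suc a) b"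
      using ssyt_col_strict[OF T, of a b] ab bounds[OF ab'] by (auto simp: cells')
  next
    fix c assume c: "c \<in> {1..length (t @ [1])}"
    show "card {(a, b) \<in> cells l. ?T a b = c} = (t @ [1]) ! (c - 1)"
    proof (cases "c = Suc (length t)")
      case True
      then have "{(a, b) \<in> cells l. ?T a b = c} = {(i, p)}"
        using ip bounds by (force split: if_splits)
      with True show ?thesis by simp
    next
      case False
      then have "{(a, b) \<in> cells l. ?T a b = c} = {(a, b) \<in> cells l - {(i, p)}. T a b = c}"
        by auto
      with ssyt_card_entries[OF T, of c] c False show ?thesis
        by (auto simp: cells' nth_append)
    qed
  qed
qed

lemma card_ssyt_largest_at_corner:
  assumes l: "sorted_wrt (\<ge>) l" and i: "corner_row l i"
  shows "card {T. is_ssyt l (t @ [1]) T \<and> T i (l ! i - 1) = Suc (length t)} = kostka (remove_corner l i) t"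
  unfolding kostka_def
proof (rule bij_betw_same_card[of "\<lambda>T. T(i := (T i)(l ! i - 1 := 0))"],
    rule bij_betw_byWitness[where f' = "\<lambda>T. T(i := (T i)(l ! i - 1 := Suc (length t)))"])
  have "T i (l ! i - 1) = 0" if "is_ssyt (remove_corner l i) t T" for T
    using that ssyt_outside cells_remove_corner[OF i] by blast
  then show "\<forall>T\<in>{T. is_ssyt (remove_corner l i) t T}.
      (\<lambda>T. T(i := (T i)(l ! i - 1 := 0))) (T(i := (T i)(l ! i - 1 := Suc (length t)))) = T"
    by (auto simp: fun_eq_iff)
qed (use ssyt_remove_largest[OF l i] ssyt_add_largest[OF l i] in \<open>auto simp: fun_eq_iff\<close>)

lemma kostka_snoc_1:
  assumes l: "sorted_wrt (\<ge>) l"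
  shows "kostka l (t @ [1]) = (\<Sum>i | corner_row l i. kostka (remove_corner l i) t)"
proof -
  let ?S = "\<lambda>i. {T. is_ssyt l (t @ [1]) T \<and> T i (l ! i - 1) = Suc (length t)}"
  have "\<exists>i. corner_row l i \<and> T i (l ! i - 1) = Suc (length t)" if T: "is_ssyt l (t @ [1]) T" for T
  proof -
    obtain x where "{(a, b) \<in> cells l. T a b = Suc (length t)} = {x}"
      using card_ssyt_largest_entry[OF T] by (rule card_1_singletonE)
    then obtain a b where "(a, b) \<in> cells l" "T a b = Suc (length t)"
      by (metis (mono_tags, lifting) case_prodE insertI1 mem_Collect_eq)
    then show ?thesis
      using ssyt_largest_entry_at_corner[OF T] by blast
  qed
  then have "{T. is_ssyt l (t @ [1]) T} = (\<Union>i\<in>{i. corner_row l i}. ?S i)"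
    by blast
  then have "kostka l (t @ [1]) = card (\<Union>i\<in>{i. corner_row l i}. ?S i)"
    by (simp add: kostka_def)
  also have "\<dots> = (\<Sum>i | corner_row l i. card (?S i))"
  proof (intro card_UN_disjoint ballI impI)
    show "finite {i. corner_row l i}"
      by (rule finite_subset[of _ "{..<length l}"]) (auto simp: corner_row_def)
    show "finite (?S i)" for i
      by (rule finite_subset[OF _ finite_ssyt]) auto
    show "?S i \<inter> ?S i' = {}" if "i \<in> {i. corner_row l i}" "i' \<in> {i. corner_row l i}" "i \<noteq> i'" for i i'
      using that ssyt_largest_entry_unique[of l t _ i "l ! i - 1" i' "l ! i' - 1"]
      by (auto simp: corner_row_def cells_def)
  qed
  also have "\<dots> = (\<Sum>i | corner_row l i. kostka (remove_corner l i) t)"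
    by (intro sum.cong refl card_ssyt_largest_at_corner[OF l]) simp
  finally show ?thesis .
qed

lemma length_le_sum_list: "0 \<notin> set xs \<Longrightarrow> length xs \<le> sum_list (xs :: nat list)"
  by (induct xs) auto

lemma finite_partitions_of: "finite (partitions_of k)"
proof (rule finite_subset)
  show "partitions_of k \<subseteq> {xs. set xs \<subseteq> {..k} \<and> length xs \<le> k}"
    using length_le_sum_list member_le_sum_list by (fastforce simp: partitions_of_def is_partition_def)
qed (rule finite_lists_length_le, simp)

lemma partition_eq_if_nth_default_eq:
  assumes "is_partition a" "is_partition b" "nth_default 0 a = nth_default 0 b"
  shows "a = b"
proof -
  have pos: "0 < nth_default 0 x i \<longleftrightarrow> i < length x" if "is_partition x" for x i
    using that by (auto simp: is_partition_def nth_default_def) (metis gr0I nth_mem)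
  have "length a = length b"
    using pos[OF assms(1)] pos[OF assms(2)] assms(3) by (metis nat_neq_iff)
  then show ?thesis
    using assms(3) by (metis nth_equalityI nth_default_nth)
qed

lemma sorted_eq_partition_append_zeros:
  assumes "sorted_wrt (\<ge>) l"
  obtains nu m where "is_partition nu" "l = nu @ replicate m 0"
proof -
  let ?nu = "takeWhile (\<lambda>x. x \<noteq> 0) l" and ?z = "dropWhile (\<lambda>x. x \<noteq> 0) l"
  have "sorted_wrt (\<ge>) (?nu @ ?z)"
    using assms by simp
  then have sorted: "sorted_wrt (\<ge>) ?nu" "sorted_wrt (\<ge>) ?z"
    unfolding sorted_wrt_append by blast+
  have zeros: "\<forall>x\<in>set ?z. x = 0"
  proof (cases ?z)
    case (Cons y ys)
    moreover have "y = 0"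
      using Cons hd_dropWhile[of "\<lambda>x. x \<noteq> 0" l] by simp
    moreover have "\<forall>x\<in>set ys. x \<le> y"
      using Cons sorted(2) by simp
    ultimately show ?thesis by auto
  next
    case Nil
    then show ?thesis by (simp del: dropWhile_eq_Nil_conv)
  qed
  have "l = ?nu @ replicate (length ?z) 0"
    using replicate_length_same[OF zeros] by simp
  moreover have "is_partition ?nu"
    using sorted(1) by (auto simp: is_partition_def dest: set_takeWhileD)
  ultimately show ?thesis
    using that by blast
qed

lemma exists_nth_default_less:
  assumes "length a \<le> N" "length b \<le> N" "sum_list a \<le> sum_list b"
    and "nth_default 0 a \<noteq> nth_default 0 b"
  shows "\<exists>i<N. nth_default 0 a i < nth_default (0 :: nat) b i"
proof (rule ccontr)
  assume "\<not> ?thesis"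
  then have le: "\<forall>i\<in>{..<N}. nth_default 0 b i \<le> nth_default 0 a i"
    by auto
  obtain i where i: "nth_default 0 a i \<noteq> nth_default 0 b i"
    using assms(4) by auto
  with assms(1,2) have "i < N"
    by (metis le_trans nth_default_beyond not_less)
  with le i have "(\<Sum>i<N. nth_default 0 b i) < (\<Sum>i<N. nth_default 0 a i)"
    by (intro sum_strict_mono_ex1) (auto simp: order_less_le intro!: bexI[of _ i])
  with assms(1-3) show False
    by (simp add: sum_nth_default)
qed

lemma aitken_det_eq_0_if_size_le:
  assumes "sorted_wrt (\<ge>) l" "sorted_wrt (\<ge>) nu" "length l \<le> n" "length nu \<le> n"
    and "sum_list l \<le> sum_list nu" "nth_default 0 l \<noteq> nth_default 0 nu"
  shows "aitken_det n (int \<circ> nth_default 0 l) nu = 0"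
  using exists_nth_default_less[OF assms(3-6)] aitken_det_eq_0_if_not_subdiagram[OF assms(1,2)]
  by blast

lemma aitken_det_same_size:
  assumes l: "sorted_wrt (\<ge>) l" "length l \<le> n"
    and nu: "nu \<in> partitions_of (sum_list l)" "length nu \<le> n"
  shows "aitken_det n (int \<circ> nth_default 0 l) nu = (if nth_default 0 nu = nth_default 0 l then 1 else 0)"
proof (cases "nth_default 0 nu = nth_default 0 l")
  case True
  have "aitken_det n (int \<circ> nth_default 0 nu) nu = 1"
    using nu by (intro aitken_det_diagonal) (simp add: partitions_of_def is_partition_def)
  with True show ?thesis by simp
next
  case False
  with l nu show ?thesis
    by (simp add: aitken_det_eq_0_if_size_le partitions_of_def is_partition_def)
qed

lemma sum_kostka_aitken_det_same_size:
  assumes l: "sorted_wrt (\<ge>) l" "sum_list l = k"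
  shows "(\<Sum>nu\<in>partitions_of k. real (kostka nu mu)
            * aitken_det (max (length l) (length nu)) (int \<circ> nth_default 0 l) nu) = kostka l mu"
proof -
  obtain nu0 m where nu0: "is_partition nu0" and "l = nu0 @ replicate m 0"
    using sorted_eq_partition_append_zeros[OF l(1)] .
  then have parts: "nth_default 0 l = nth_default 0 nu0" and "nu0 \<in> partitions_of k"
    using l(2) by (simp_all add: partitions_of_def sum_list_replicate)
  have "aitken_det (max (length l) (length nu)) (int \<circ> nth_default 0 l) nu = (if nu = nu0 then 1 else 0)"
    if "nu \<in> partitions_of k" for nu
    using aitken_det_same_size[OF l(1), of _ nu] partition_eq_if_nth_default_eq[OF _ nu0] that l(2) parts
    by (auto simp: partitions_of_def)
  then have "(\<Sum>nu\<in>partitions_of k. real (kostka nu mu)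
                 * aitken_det (max (length l) (length nu)) (int \<circ> nth_default 0 l) nu)
      = (\<Sum>nu\<in>partitions_of k. if nu = nu0 then real (kostka nu mu) else 0)"
    by (intro sum.cong) simp_all
  also have "\<dots> = kostka nu0 mu"
    using \<open>nu0 \<in> partitions_of k\<close> by (simp add: finite_partitions_of)
  also have "kostka nu0 mu = kostka l mu"
    by (intro kostka_cong_cells) (simp add: cells_eq_nth_default parts)
  finally show ?thesis .
qed

text \<open>The determinant size max (length l) (length nu) is the one used by shifted_schur_at.\<close>
lemma kostka_append_replicate_1:
  assumes "sorted_wrt (\<ge>) l" "sum_list l = k + r"
  shows "real (kostka l (mu @ replicate r 1))
    = fact r * (\<Sum>nu\<in>partitions_of k. real (kostka nu mu)
                 * aitken_det (max (length l) (length nu)) (int \<circ> nth_default 0 l) nu)"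
  using assms
proof (induction r arbitrary: l)
  case 0
  then show ?case
    by (subst sum_kostka_aitken_det_same_size[of l k]) simp_all
next
  case (Suc r)
  let ?x = "int \<circ> nth_default 0 l" and ?A = "\<lambda>x nu. aitken_det (max (length l) (length nu)) x nu"
  have IH: "real (kostka (remove_corner l i) (mu @ replicate r 1))
      = fact r * (\<Sum>nu\<in>partitions_of k. real (kostka nu mu) * ?A (?x(i := ?x i - 1)) nu)"
    if "corner_row l i" for i
  proof -
    have x: "int \<circ> nth_default 0 (remove_corner l i) = ?x(i := ?x i - 1)"
      using that by (auto simp: nth_default_remove_corner corner_row_def nth_default_nth of_nat_diff)
    have "sum_list (remove_corner l i) = k + r"
      using Suc.prems(2) sum_list_remove_corner[OF that] by simp
    from Suc.IH[OF sorted_remove_corner[OF Suc.prems(1) that] this] show ?thesis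
      unfolding x length_remove_corner .
  qed
  have "real (kostka l (mu @ replicate (Suc r) 1))
      = (\<Sum>i | corner_row l i. real (kostka (remove_corner l i) (mu @ replicate r 1)))"
    using kostka_snoc_1[OF Suc.prems(1), of "mu @ replicate r 1"]
    by (simp add: replicate_append_same[symmetric])
  also have "\<dots> = (\<Sum>i | corner_row l i.
      fact r * (\<Sum>nu\<in>partitions_of k. real (kostka nu mu) * ?A (?x(i := ?x i - 1)) nu))"
    by (intro sum.cong refl IH) simp
  also have "\<dots> = fact r * (\<Sum>nu\<in>partitions_of k. real (kostka nu mu)
                   * (\<Sum>i | corner_row l i. ?A (?x(i := ?x i - 1)) nu))"
    by (simp add: sum_distrib_left sum.swap[of _ "{i. corner_row l i}"] mult_ac)
  also have "\<dots> = fact r * (\<Sum>nu\<in>partitions_of k. real (kostka nu mu) * (real (Suc r) * ?A ?x nu))"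
  proof -
    have "(\<Sum>i | corner_row l i. ?A (?x(i := ?x i - 1)) nu) = real (Suc r) * ?A ?x nu"
      if "nu \<in> partitions_of k" for nu
      using sum_corner_rows_aitken_det[OF Suc.prems(1), of _ nu] Suc.prems(2) that
      by (simp add: partitions_of_def)
    then show ?thesis
      by (simp cong: sum.cong)
  qed
  also have "\<dots> = fact (Suc r) * (\<Sum>nu\<in>partitions_of k. real (kostka nu mu) * ?A ?x nu)"
    by (simp add: sum_distrib_left mult_ac)
  finally show ?case .
qed

lemma aitken_det_eq_0_if_size_less:
  assumes "sorted_wrt (\<ge>) l" "sorted_wrt (\<ge>) nu" "length l \<le> n" "length nu \<le> n"
    and "sum_list l < sum_list nu"
  shows "aitken_det n (int \<circ> nth_default 0 l) nu = 0"
proof (rule aitken_det_eq_0_if_size_le[OF assms(1-4)])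
  show "nth_default 0 l \<noteq> nth_default 0 nu"
    using sum_nth_default[OF assms(3)] sum_nth_default[OF assms(4)] assms(5) by auto
qed (use assms(5) in simp)

lemma partitions_of_0: "partitions_of 0 = {[]}"
  by (auto simp: partitions_of_def is_partition_def sum_list_eq_0_iff) (metis list.set_intros(1) neq_Nil_conv)

lemma kostka_Nil_Nil: "kostka [] [] = 1"
proof -
  have "{T. is_ssyt [] [] T} = {\<lambda>_ _. 0}"
    by (auto simp: is_ssyt_def cells_def fun_eq_iff)
  then show ?thesis
    by (simp add: kostka_def)
qed

lemma kostka_standard_eq_aitken_det:
  assumes l: "sorted_wrt (\<ge>) l" and n: "length l \<le> n"
  shows "real (kostka l (replicate (sum_list l) 1))
    = fact (sum_list l) * aitken_det n (int \<circ> nth_default 0 l) []"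
proof -
  let ?l = "l @ replicate (n - length l) 0"
  have "sorted_wrt (\<ge>) (replicate m (0 :: nat))" for m
    by (induct m) auto
  with l have "sorted_wrt (\<ge>) ?l"
    by (simp add: sorted_wrt_append)
  from kostka_append_replicate_1[OF this, of 0 "sum_list l" "[]"]
  have "real (kostka ?l (replicate (sum_list l) 1))
      = fact (sum_list l) * aitken_det n (int \<circ> nth_default 0 l) []"
    using n by (simp add: partitions_of_0 kostka_Nil_Nil)
  moreover have "kostka ?l (replicate (sum_list l) 1) = kostka l (replicate (sum_list l) 1)"
    by (intro kostka_cong_cells) (simp add: cells_eq_nth_default)
  ultimately show ?thesis by simp
qed

lemma ffact_r_of_nat: "ffact_r (real l) m = real (l choose m) * fact m"
  by (simp add: ffact_r_def binomial_gbinomial gbinomial_mult_fact' atLeast0LessThan)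

lemma ffact_r_of_nat_eq_inv_fact: "ffact_r (real l) m = fact l * inv_fact (int l - int m)"
proof (cases "m \<le> l")
  case True
  have fact_l: "fact l = fact m * fact (l - m) * real (l choose m)"
    using binomial_fact_lemma[OF True] by (metis of_nat_fact of_nat_mult)
  have "inv_fact (int l - int m) = 1 / fact (l - m)"
    using True by (simp add: inv_fact_def nat_diff_distrib)
  then show ?thesis
    unfolding ffact_r_of_nat fact_l by simp
next
  case False
  then show ?thesis
    by (simp add: ffact_r_of_nat inv_fact_def)
qed

lemma det_ffact_r_eq_aitken_det:
  "det (mat n n (\<lambda>(i, j). ffact_r (real (nth_default 0 l i) + real n - real (Suc i))
                                   (nth_default 0 v j + n - Suc j)))
     = (\<Prod>i<n. fact (nth_default 0 l i + n - Suc i)) * aitken_det n (int \<circ> nth_default 0 l) v"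
proof -
  have "ffact_r (real (nth_default 0 l i) + real n - real (Suc i)) (nth_default 0 v j + n - Suc j)
      = fact (nth_default 0 l i + n - Suc i)
        * inv_fact (int (nth_default 0 l i) - int (nth_default 0 v j) - int i + int j)"
    if "i < n" "j < n" for i j
  proof -
    have row: "real (nth_default 0 l i) + real n - real (Suc i) = real (nth_default 0 l i + n - Suc i)"
      using that by (simp add: of_nat_diff)
    have arg: "int (nth_default 0 l i + n - Suc i) - int (nth_default 0 v j + n - Suc j)
        = int (nth_default 0 l i) - int (nth_default 0 v j) - int i + int j"
      using that by (simp add: of_nat_diff)
    show ?thesis
      by (simp only: row ffact_r_of_nat_eq_inv_fact arg)
  qed
  then show ?thesis
    unfolding aitken_det_def det_mat_scale_rows[symmetric] by (intro det_mat_cong) auto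
qed

lemma shifted_schur_at_eq_aitken_det:
  "shifted_schur_at nu l = aitken_det (max (length l) (length nu)) (int \<circ> nth_default 0 l) nu
                         / aitken_det (max (length l) (length nu)) (int \<circ> nth_default 0 l) []"
proof -
  define n where "n = max (length l) (length nu)"
  have row: "(if i < length l then real (l ! i) else 0) = real (nth_default 0 l i)" for i
    by (simp add: nth_default_def)
  have col: "(if j < length nu then nu ! j else 0) = nth_default 0 nu j" for j
    by (simp add: nth_default_def)
  have "(\<Prod>i<n. fact (nth_default 0 l i + n - Suc i) :: real) \<noteq> 0"
    by simp
  then show ?thesis
    using det_ffact_r_eq_aitken_det[of n l nu] det_ffact_r_eq_aitken_det[of n l "[]"]
    unfolding shifted_schur_at_def shifted_schur_def n_def[symmetric] row col by simp
qed

lemma shifted_schur_at_eq_kostka: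
  assumes "sorted_wrt (\<ge>) lam"
  shows "shifted_schur_at nu lam
    = fact (sum_list lam) * aitken_det (max (length lam) (length nu)) (int \<circ> nth_default 0 lam) nu
      / real (kostka lam (replicate (sum_list lam) 1))"
  using shifted_schur_at_eq_aitken_det[of nu lam]
    kostka_standard_eq_aitken_det[OF assms, of "max (length lam) (length nu)"] by simp

lemma Ko_eq_sum_aitken_det:
  assumes mu: "mu \<in> partitions_of k" and lam: "sorted_wrt (\<ge>) lam"
  shows "Ko mu lam = fact (sum_list lam)
    * (\<Sum>nu\<in>partitions_of k. real (kostka nu mu)
         * aitken_det (max (length lam) (length nu)) (int \<circ> nth_default 0 lam) nu)
    / real (kostka lam (replicate (sum_list lam) 1))"
proof -
  define n where "n = sum_list lam"
  have k: "sum_list mu = k"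
    using mu by (simp add: partitions_of_def)
  show ?thesis
  proof (cases "k \<le> n")
    case True
    then have "ffact_r (real n) k * fact (n - k) = fact n"
      by (simp add: ffact_r_of_nat binomial_fact)
    with True show ?thesis
      using kostka_append_replicate_1[OF lam, of k "n - k" mu]
      by (simp add: Ko_def Let_def k n_def mult.assoc)
  next
    case False
    then have "aitken_det (max (length lam) (length nu)) (int \<circ> nth_default 0 lam) nu = 0"
      if "nu \<in> partitions_of k" for nu
      using that lam by (intro aitken_det_eq_0_if_size_less) (auto simp: partitions_of_def is_partition_def n_def)
    with False show ?thesis
      by (simp add: Ko_def Let_def k flip: n_def)
  qed
qed

theorem proposition2p6:
  fixes mu :: "nat list" and k :: nat
  assumes "mu \<in> partitions_of k"
  shows "\<forall>lam. is_partition lam \<longrightarrow>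
           Ko mu lam = (\<Sum>nu \<in> partitions_of k. real (kostka nu mu) * shifted_schur_at nu lam)"
proof (intro allI impI)
  fix lam assume "is_partition lam"
  then have lam: "sorted_wrt (\<ge>) lam"
    by (simp add: is_partition_def)
  show "Ko mu lam = (\<Sum>nu\<in>partitions_of k. real (kostka nu mu) * shifted_schur_at nu lam)"
    unfolding Ko_eq_sum_aitken_det[OF assms lam] shifted_schur_at_eq_kostka[OF lam]
    by (simp add: sum_divide_distrib sum_distrib_left mult_ac)
qed

end
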